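(* Let $H$ be a red-blue colouring of $K_n$ satisfying $\mathrm{pack}(H) \le n^2/4$. Let $\{X_1, X_2\}$ be a partition of $V(H)$ with at most $(n-2)/6$ blue edges having both ends in $X_1$ or both ends in $X_2$. Then $n/2 - \sqrt{n} \le |X_i| \le n/2 + \sqrt{n}$ for $i \in [2]$.
   Context: A red-blue colouring $H$ of $K_n$ assigns red or blue to each edge of the complete graph on the $n$-vertex set $V(H)$; $H_R, H_B$ are the spanning subgraphs of red and blue edges. For a graph $F$, a fractional triangle packing is a function $\omega$ from the triangles of $F$ to $[0,1]$ with $\sum_{T \ni e}\omega(T) \le 1$ for every edge $e$; $\nu^*(F)$ is the maximum of $\sum_T\omega(T)$; $\mathrm{pack}(H) = 3(\nu^*(H_R)+\nu^*(H_B))$. *)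

theory Defs
  imports Complex_Main
begin

text \<open>Edges of the complete graph on vertex set V: the 2-element subsets of V.
  A graph F on V is given by its edge set E (a set of 2-element subsets of V).\<close>
definition complete_edges :: "'a set \<Rightarrow> 'a set set" where
  "complete_edges V = {e. e \<subseteq> V \<and> card e = 2}"

definition triangles :: "'a set set \<Rightarrow> 'a set set" where
  "triangles E = {T. finite T \<and> card T = 3 \<and> (\<forall>e. e \<subseteq> T \<and> card e = 2 \<longrightarrow> e \<in> E)}"

definition frac_tri_packing :: "'a set set \<Rightarrow> ('a set \<Rightarrow> real) \<Rightarrow> bool" where
  "frac_tri_packing E \<omega> \<longleftrightarrow>
     (\<forall>T\<in>triangles E. 0 \<le> \<omega> T \<and> \<omega> T \<le> 1) \<and>
     (\<forall>e\<in>E. (\<Sum>T\<in>{T\<in>triangles E. e \<subseteq> T}. \<omega> T) \<le> 1)"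

definition nu_star :: "'a set set \<Rightarrow> real" where
  "nu_star E = Sup {(\<Sum>T\<in>triangles E. \<omega> T) | \<omega>. frac_tri_packing E \<omega>}"

text \<open>A red-blue colouring of K_n on V is given by its set R of red edges
  (R \<subseteq> complete_edges V); the blue edges are the remaining ones.\<close>
definition blue_edges :: "'a set \<Rightarrow> 'a set set \<Rightarrow> 'a set set" where
  "blue_edges V R = complete_edges V - R"

definition pack :: "'a set \<Rightarrow> 'a set set \<Rightarrow> real" where
  "pack V R = 3 * (nu_star R + nu_star (blue_edges V R))"

end

theory Submission
  imports Defs
begin

(* Give every red triangle inside a part X the weight 1/(|X| - 2). A red edge inside X lies in
   at most |X| - 2 triangles of X and the parts are disjoint, so this is a fractional triangle
   packing of the red graph of weight t_X/(|X| - 2) per part, t_X being the number of red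
   triangles in X. Every 3-subset of X is a red triangle or contains one of the b_X blue edges
   inside X, so t_X >= C(|X|,3) - b_X (|X| - 2) and the part contributes at least
   C(|X|,2)/3 - b_X. Hence pack(H) >= C(|X1|,2) + C(|X2|,2) - 3 (b_X1 + b_X2), which together
   with pack(H) <= n^2/4 and b_X1 + b_X2 <= (n - 2)/6 forces (|X1| - |X2|)^2 <= 4n. *)

lemma packing_weight_le_nu_star:
  assumes "frac_tri_packing E \<omega>"
  shows "(\<Sum>T\<in>triangles E. \<omega> T) \<le> nu_star E"
  unfolding nu_star_def
proof (rule cSup_upper)
  show "bdd_above {(\<Sum>T\<in>triangles E. \<omega> T) | \<omega>. frac_tri_packing E \<omega>}"
  proof (rule bdd_aboveI)
    fix s assume "s \<in> {(\<Sum>T\<in>triangles E. \<omega> T) | \<omega>. frac_tri_packing E \<omega>}"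
    then obtain w where "s = (\<Sum>T\<in>triangles E. w T)" "frac_tri_packing E w" by blast
    \<comment> \<open>also for infinitely many triangles, where sum and card are both 0\<close>
    then show "s \<le> real (card (triangles E))"
      using sum_mono[of "triangles E" w "\<lambda>_. 1"] by (auto simp: frac_tri_packing_def)
  qed
qed (use assms in blast)

lemma nu_star_nonneg: "0 \<le> nu_star E"
  using packing_weight_le_nu_star[of E "\<lambda>_. 0"] by (simp add: frac_tri_packing_def)

lemma finite_blue_edges: "finite V \<Longrightarrow> finite (blue_edges V R)"
  by (auto simp: blue_edges_def complete_edges_def intro: finite_subset[of _ "Pow V"])

lemma finite_triangles:
  assumes "finite V" "E \<subseteq> complete_edges V"
  shows "finite (triangles E)"
proof (rule finite_subset[of _ "Pow V"])
  show "triangles E \<subseteq> Pow V"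
  proof
    fix T assume T: "T \<in> triangles E"
    show "T \<in> Pow V" unfolding Pow_iff
    proof
      fix x assume x: "x \<in> T"
      have "card (T - {x}) = 2" using T x by (simp add: triangles_def)
      then obtain y where "y \<in> T - {x}" by (metis card.empty ex_in_conv zero_neq_numeral)
      then have "{x, y} \<in> E" using T x by (auto simp: triangles_def)
      then show "x \<in> V" using assms(2) by (auto simp: complete_edges_def)
    qed
  qed
qed (use assms in simp)

lemma card_triangle_le:
  assumes "T \<in> triangles E" "T \<subseteq> X" "finite X"
  shows "3 \<le> card X"
  using assms card_mono[OF assms(3,2)] by (auto simp: triangles_def)

lemma card_three_supersets_le:
  assumes "finite X" "e \<subseteq> X" "card e = 2"
  shows "card {T. T \<subseteq> X \<and> card T = 3 \<and> e \<subseteq> T} \<le> card X - 2"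
proof -
  have fin_e: "finite e" using assms(1,2) finite_subset by blast
  have "{T. T \<subseteq> X \<and> card T = 3 \<and> e \<subseteq> T} \<subseteq> (\<lambda>x. insert x e) ` (X - e)"
  proof
    fix T assume T: "T \<in> {T. T \<subseteq> X \<and> card T = 3 \<and> e \<subseteq> T}"
    then have "card (T - e) = 1"
      using assms fin_e finite_subset[of T X] by (simp add: card_Diff_subset)
    then obtain x where "T - e = {x}" by (meson card_1_singletonE)
    then show "T \<in> (\<lambda>x. insert x e) ` (X - e)" using T by blast
  qed
  then have "card {T. T \<subseteq> X \<and> card T = 3 \<and> e \<subseteq> T} \<le> card ((\<lambda>x. insert x e) ` (X - e))"
    using assms(1) by (simp add: card_mono)
  also have "\<dots> \<le> card (X - e)" using card_image_le assms(1) by blast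
  also have "\<dots> = card X - 2" using assms fin_e by (simp add: card_Diff_subset)
  finally show ?thesis .
qed

lemma sum_over_disjoint_supersets_le_1:
  fixes f :: "'a set \<Rightarrow> real"
  assumes "finite P" "pairwise disjnt P" "S \<noteq> {}"
    and "\<And>X. X \<in> P \<Longrightarrow> S \<subseteq> X \<Longrightarrow> f X \<le> 1"
    and "\<And>X. X \<in> P \<Longrightarrow> \<not> S \<subseteq> X \<Longrightarrow> f X = 0"
  shows "(\<Sum>X\<in>P. f X) \<le> 1"
proof -
  have "(\<Sum>X\<in>P. f X) = (\<Sum>X\<in>{X\<in>P. S \<subseteq> X}. f X)"
    by (rule sum.mono_neutral_right) (use assms in auto)
  also have "\<dots> \<le> real (card {X\<in>P. S \<subseteq> X})"
    using sum_bounded_above[of "{X\<in>P. S \<subseteq> X}" f 1] assms(4) by simp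
  also have "card {X\<in>P. S \<subseteq> X} \<le> 1"
    using assms(1-3) by (simp add: card_le_Suc0_iff_eq pairwise_def disjnt_def) blast
  finally show ?thesis by simp
qed

lemma part_triangle_weights_le_nu_star:
  assumes "finite V" "R \<subseteq> complete_edges V"
    and "finite P" "pairwise disjnt P" "\<And>X. X \<in> P \<Longrightarrow> finite X"
  shows "(\<Sum>X\<in>P. real (card {T\<in>triangles R. T \<subseteq> X}) / (real (card X) - 2)) \<le> nu_star R"
proof -
  define \<omega> where "\<omega> T = (\<Sum>X\<in>P. if T \<subseteq> X then 1 / (real (card X) - 2) else 0)" for T
  have fin: "finite (triangles R)" using finite_triangles[OF assms(1,2)] .
  have sum_\<omega>: "(\<Sum>T\<in>A. \<omega> T) = (\<Sum>X\<in>P. real (card {T\<in>A. T \<subseteq> X}) / (real (card X) - 2))"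
    if "finite A" for A
    unfolding \<omega>_def using that by (subst sum.swap) (simp add: sum.inter_filter[symmetric])
  have "frac_tri_packing R \<omega>"
    unfolding frac_tri_packing_def
  proof (intro conjI ballI)
    fix T assume T: "T \<in> triangles R"
    have ne: "T \<noteq> {}" using T by (auto simp: triangles_def)
    have big: "3 \<le> card X" if "X \<in> P" "T \<subseteq> X" for X
      using card_triangle_le[OF T that(2) assms(5)[OF that(1)]] .
    show "0 \<le> \<omega> T" unfolding \<omega>_def by (rule sum_nonneg) (auto dest: big)
    show "\<omega> T \<le> 1" unfolding \<omega>_def
      by (rule sum_over_disjoint_supersets_le_1[OF assms(3,4) ne]) (auto dest: big)
  next
    fix e assume "e \<in> R"
    then have e: "card e = 2" "e \<noteq> {}" using assms(2) by (auto simp: complete_edges_def)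
    let ?S = "{T \<in> triangles R. e \<subseteq> T}"
    have ratio_le_1: "real c / (real a - 2) \<le> 1" if "c \<le> a - 2" for c a :: nat
      using that by (cases "c = 0") (auto simp: divide_le_eq)
    have "(\<Sum>X\<in>P. real (card {T\<in>?S. T \<subseteq> X}) / (real (card X) - 2)) \<le> 1"
    proof (rule sum_over_disjoint_supersets_le_1[OF assms(3,4) e(2)])
      fix X assume X: "X \<in> P" "e \<subseteq> X"
      show "real (card {T\<in>?S. T \<subseteq> X}) / (real (card X) - 2) \<le> 1"
      proof (rule ratio_le_1)
        have "card {T\<in>?S. T \<subseteq> X} \<le> card {T. T \<subseteq> X \<and> card T = 3 \<and> e \<subseteq> T}"
          using X assms(5) by (intro card_mono) (auto simp: triangles_def)
        also have "\<dots> \<le> card X - 2" using card_three_supersets_le X assms(5) e(1) by blast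
        finally show "card {T\<in>?S. T \<subseteq> X} \<le> card X - 2" .
      qed
    next
      fix X assume "\<not> e \<subseteq> X"
      then have "{T\<in>?S. T \<subseteq> X} = {}" by blast
      then show "real (card {T\<in>?S. T \<subseteq> X}) / (real (card X) - 2) = 0"
        by (simp only: card.empty of_nat_0 div_0)
    qed
    then show "(\<Sum>T\<in>?S. \<omega> T) \<le> 1" using sum_\<omega> fin by simp
  qed
  from packing_weight_le_nu_star[OF this] show ?thesis using sum_\<omega>[OF fin] by simp
qed

lemma card_choose_3_le_triangles_plus_blue:
  assumes "finite V" "R \<subseteq> complete_edges V" "X \<subseteq> V"
  shows "card X choose 3
    \<le> card {T\<in>triangles R. T \<subseteq> X} + card {e\<in>blue_edges V R. e \<subseteq> X} * (card X - 2)"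
proof -
  let ?B = "{e\<in>blue_edges V R. e \<subseteq> X}"
  let ?through = "\<lambda>e. {T. T \<subseteq> X \<and> card T = 3 \<and> e \<subseteq> T}"
  have fin_X: "finite X" using assms(1,3) finite_subset by blast
  have fin_B: "finite ?B" using fin_X by (auto intro: finite_subset[of _ "Pow X"])
  have "{T. T \<subseteq> X \<and> card T = 3} \<subseteq> {T\<in>triangles R. T \<subseteq> X} \<union> (\<Union>e\<in>?B. ?through e)"
  proof
    fix T assume T: "T \<in> {T. T \<subseteq> X \<and> card T = 3}"
    show "T \<in> {T\<in>triangles R. T \<subseteq> X} \<union> (\<Union>e\<in>?B. ?through e)"
    proof (cases "T \<in> triangles R")
      case False
      then obtain e where e: "e \<subseteq> T" "card e = 2" "e \<notin> R"
        using T fin_X finite_subset by (auto simp: triangles_def)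
      then have "e \<in> ?B" using T assms(3) by (auto simp: blue_edges_def complete_edges_def)
      then show ?thesis using e(1) T by blast
    qed (use T in blast)
  qed
  then have "card X choose 3 \<le> card ({T\<in>triangles R. T \<subseteq> X} \<union> (\<Union>e\<in>?B. ?through e))"
    using fin_X by (simp add: n_subsets[symmetric] card_mono)
  also have "\<dots> \<le> card {T\<in>triangles R. T \<subseteq> X} + (\<Sum>e\<in>?B. card (?through e))"
    by (rule order_trans[OF card_Un_le add_left_mono[OF card_UN_le[OF fin_B]]])
  also have "(\<Sum>e\<in>?B. card (?through e)) \<le> card ?B * (card X - 2)"
    using sum_bounded_above[of ?B "\<lambda>e. card (?through e)" "card X - 2"]
      card_three_supersets_le[OF fin_X] by (auto simp: blue_edges_def complete_edges_def)
  finally show ?thesis by simp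
qed

lemma real_choose_two: "real (n choose 2) = real n * (real n - 1) / 2"
proof -
  have "even (n * (n - 1))" by (cases n) auto
  then show ?thesis by (cases n) (auto simp: choose_two real_of_nat_div algebra_simps)
qed

lemma real_choose_three: "real (n choose 3) = real n * (real n - 1) * (real n - 2) / 6"
proof (induction n)
  case (Suc n)
  have "Suc n choose 3 = (n choose 2) + (n choose 3)"
    using binomial_Suc_Suc[of n 2] by simp
  then show ?case using Suc by (simp add: real_choose_two field_simps)
qed simp

text \<open>A part with fewer than 3 vertices contains no triangle, so it contributes nothing to the
  packing even when its edge is red.\<close>

definition part_edge_bound :: "nat \<Rightarrow> real" where
  "part_edge_bound a = (if 3 \<le> a then real (a choose 2) else 0)"

lemma part_edge_bound_le_triangle_weight:
  assumes "finite V" "R \<subseteq> complete_edges V" "X \<subseteq> V"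
  shows "part_edge_bound (card X) - 3 * real (card {e\<in>blue_edges V R. e \<subseteq> X})
    \<le> 3 * (real (card {T\<in>triangles R. T \<subseteq> X}) / (real (card X) - 2))"
proof (cases "3 \<le> card X")
  case True
  define a t \<beta> where "a = real (card X)" and "t = real (card {T\<in>triangles R. T \<subseteq> X})"
    and "\<beta> = real (card {e\<in>blue_edges V R. e \<subseteq> X})"
  have "real (card X choose 3) \<le> real (card {T\<in>triangles R. T \<subseteq> X}
      + card {e\<in>blue_edges V R. e \<subseteq> X} * (card X - 2))"
    using card_choose_3_le_triangles_plus_blue[OF assms] by (rule of_nat_mono)
  then have "a * (a - 1) * (a - 2) / 6 \<le> t + \<beta> * (a - 2)"
    using True unfolding real_choose_three a_def t_def \<beta>_def by simp
  then have "(a * (a - 1) / 2 - 3 * \<beta>) * (a - 2) \<le> 3 * t"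
    by (simp add: algebra_simps)
  moreover have "0 < a - 2" using True by (simp add: a_def)
  ultimately have "a * (a - 1) / 2 - 3 * \<beta> \<le> 3 * (t / (a - 2))"
    by (simp add: pos_le_divide_eq)
  then show ?thesis using True by (simp add: part_edge_bound_def real_choose_two a_def t_def \<beta>_def)
next
  case False
  then have no_triangles: "{T\<in>triangles R. T \<subseteq> X} = {}"
    using card_triangle_le assms(1,3) finite_subset by blast
  show ?thesis using False by (simp add: part_edge_bound_def no_triangles)
qed

lemma sq_diff_le_of_part_edge_bounds:
  fixes a b :: nat and \<beta> :: real
  assumes "1 \<le> a" "1 \<le> b"
    and "part_edge_bound a + part_edge_bound b - 3 * \<beta> \<le> real (a + b) ^ 2 / 4"
    and "6 * \<beta> \<le> real (a + b) - 2"
  shows "(real a - real b) ^ 2 \<le> 4 * real (a + b)"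
  using assms
proof (induction a b rule: linorder_wlog)
  case (le a b)
  consider "3 \<le> a" | "a = 1 \<or> a = 2" "3 \<le> b" | "a \<le> 2" "b \<le> 2"
    using le.prems(1) by linarith
  then show ?case
  proof cases
    case 1
    then have "real a * (real a - 1) / 2 + real b * (real b - 1) / 2 - 3 * \<beta> \<le> real (a + b) ^ 2 / 4"
      using le by (simp add: part_edge_bound_def real_choose_two)
    then show ?thesis using le.prems(4) by (simp add: power2_eq_square field_simps)
  next
    case 2
    then have "part_edge_bound a = 0" by (auto simp: part_edge_bound_def)
    then have "real b * (real b - 1) / 2 - 3 * \<beta> \<le> real (a + b) ^ 2 / 4"
      using 2 le by (simp add: part_edge_bound_def real_choose_two)
    then show ?thesis using 2(1) le.prems(4) by (auto simp: power2_eq_square field_simps)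
  next
    case 3
    then have "a \<in> {1, 2}" "b \<in> {1, 2}" using le.prems(1,2) by auto
    then show ?thesis by (auto simp: power2_eq_square)
  qed
next
  case (sym a b)
  then show ?case by (simp add: add.commute power2_commute)
qed

lemma card_inside_disjoint_parts:
  assumes "finite E" "{} \<notin> E" "X1 \<inter> X2 = {}"
  shows "card {e\<in>E. e \<subseteq> X1 \<or> e \<subseteq> X2} = card {e\<in>E. e \<subseteq> X1} + card {e\<in>E. e \<subseteq> X2}"
proof -
  have "e = {}" if "e \<subseteq> X1" "e \<subseteq> X2" for e using that assms(3) by blast
  then have "{e\<in>E. e \<subseteq> X1} \<inter> {e\<in>E. e \<subseteq> X2} = {}" using assms(2) by blast
  moreover have "{e\<in>E. e \<subseteq> X1 \<or> e \<subseteq> X2} = {e\<in>E. e \<subseteq> X1} \<union> {e\<in>E. e \<subseteq> X2}" by blast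
  ultimately show ?thesis using assms(1) by (simp add: card_Un_disjoint)
qed

lemma near_half_of_sq_diff_le:
  fixes a b :: real
  assumes "(a - b) ^ 2 \<le> 4 * (a + b)"
  shows "(a + b) / 2 - sqrt (a + b) \<le> a \<and> a \<le> (a + b) / 2 + sqrt (a + b)"
proof -
  have "(a - (a + b) / 2) ^ 2 \<le> a + b" using assms by (simp add: power2_eq_square field_simps)
  then have "\<bar>a - (a + b) / 2\<bar> \<le> sqrt (a + b)" using real_sqrt_le_mono by fastforce
  then show ?thesis by linarith
qed

theorem proposition6p3:
  fixes V :: "'a set" and R :: "'a set set" and X1 X2 :: "'a set" and n :: nat
  assumes "finite V" and "card V = n"
    and "R \<subseteq> complete_edges V"
    and "pack V R \<le> real n ^ 2 / 4"
    and "X1 \<union> X2 = V" and "X1 \<inter> X2 = {}" and "X1 \<noteq> {}" and "X2 \<noteq> {}"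
    and "real (card {e \<in> blue_edges V R. e \<subseteq> X1 \<or> e \<subseteq> X2}) \<le> (real n - 2) / 6"
  shows "real n / 2 - sqrt (real n) \<le> real (card X1) \<and> real (card X1) \<le> real n / 2 + sqrt (real n)
       \<and> real n / 2 - sqrt (real n) \<le> real (card X2) \<and> real (card X2) \<le> real n / 2 + sqrt (real n)"
proof -
  let ?\<beta> = "\<lambda>X. real (card {e \<in> blue_edges V R. e \<subseteq> X})"
  let ?w = "\<lambda>X. real (card {T\<in>triangles R. T \<subseteq> X}) / (real (card X) - 2)"
  have parts: "finite X1" "finite X2" "X1 \<subseteq> V" "X2 \<subseteq> V" "X1 \<noteq> X2"
    using assms(1,5-7) by auto
  have n: "n = card X1 + card X2" using assms(2,5,6) parts card_Un_disjoint by metis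
  have packing: "?w X1 + ?w X2 \<le> nu_star R"
    using part_triangle_weights_le_nu_star[OF assms(1,3), of "{X1, X2}"] parts assms(6)
    by (auto simp: pairwise_insert disjnt_def Int_commute)
  have red: "3 * nu_star R \<le> real (card X1 + card X2) ^ 2 / 4"
    using assms(4) nu_star_nonneg[of "blue_edges V R"] n by (simp add: pack_def)
  have blue: "6 * (?\<beta> X1 + ?\<beta> X2) \<le> real (card X1 + card X2) - 2"
    using assms(6,9) n card_inside_disjoint_parts[OF finite_blue_edges[OF assms(1)], of R X1 X2]
    by (simp add: blue_edges_def complete_edges_def)
  have "1 \<le> card X1" "1 \<le> card X2"
    using parts(1,2) assms(7,8) by (auto simp: Suc_le_eq card_gt_0_iff)
  moreover have "part_edge_bound (card X1) + part_edge_bound (card X2) - 3 * (?\<beta> X1 + ?\<beta> X2)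
      \<le> real (card X1 + card X2) ^ 2 / 4"
    using part_edge_bound_le_triangle_weight[OF assms(1,3) parts(3)]
      part_edge_bound_le_triangle_weight[OF assms(1,3) parts(4)] packing red by (smt (verit))
  ultimately have "(real (card X1) - real (card X2)) ^ 2 \<le> 4 * real (card X1 + card X2)"
    using blue by (rule sq_diff_le_of_part_edge_bounds)
  then show ?thesis
    using near_half_of_sq_diff_le[of "real (card X1)" "real (card X2)"]
      near_half_of_sq_diff_le[of "real (card X2)" "real (card X1)"] n
    by (simp add: power2_commute add.commute)
qed

end
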